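(* Let $n\ge1$, $\sigma>0$, $\tau>0$, $\theta_0\in\mathbb R$, and set $w=n\tau^2/(\sigma^2+n\tau^2)$. Define $$P_b=2\Big[1-\Phi\Big(\frac{n\tau(\bar X-\theta_0)}{\sigma\sqrt{\sigma^2+n\tau^2}}\Big)\Big],\qquad P_f=2\Big[1-\Phi\Big(\frac{\sqrt n(\bar X-\theta_0)}{\sigma}\Big)\Big],$$ where $\Phi$ is the standard normal CDF, and suppose $\bar X$ has the marginal (prior predictive) distribution $N(\theta_0,\tau^2+\sigma^2/n)$. Then $$\rho(P_b,P_f)=\frac{\arcsin\big(\sqrt{w/(2-w)}\big)}{\sqrt{\arcsin(w)\,\arcsin\big(1/(2-w)\big)}}.$$
   Context: This is the two-sided problem $H:\theta=\theta_0$ vs $K:\theta\ne\theta_0$ for the mean of i.i.d. $N(\theta,\sigma^2)$ observations with known $\sigma^2$, sample mean $\bar X$, and prior $\theta\sim N(\theta_0,\tau^2)$ (so that marginally $\bar X\sim N(\theta_0,\tau^2+\sigma^2/n)$); $P_b$ is the paper's posterior-probability measure and $P_f$ its $p$-value. *)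

theory Defs
  imports "HOL-Probability.Probability"
begin

definition std_normal_cdf :: "real \<Rightarrow> real" where
  "std_normal_cdf x = cdf (density lborel std_normal_density) x"

definition pearson_corr :: "'a measure \<Rightarrow> ('a \<Rightarrow> real) \<Rightarrow> ('a \<Rightarrow> real) \<Rightarrow> real" where
  "pearson_corr M X Y =
     (let mX = integral\<^sup>L M X; mY = integral\<^sup>L M Y
      in (integral\<^sup>L M (\<lambda>\<omega>. (X \<omega> - mX) * (Y \<omega> - mY)))
         / sqrt (integral\<^sup>L M (\<lambda>\<omega>. (X \<omega> - mX)\<^sup>2) * integral\<^sup>L M (\<lambda>\<omega>. (Y \<omega> - mY)\<^sup>2)))"

end

(* Put Z = sqrt n (Xbar - theta_0) / sqrt (sigma^2 + n tau^2), which is standard normal under the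
   prior predictive distribution, a = sqrt n tau / sigma and b = sqrt (1 + a^2). Then
   P_b = 2 - 2 Phi (a Z), P_f = 2 - 2 Phi (b Z) and w = a^2 / (1 + a^2). The correlation is
   invariant under these affine maps, and Sheppard's formula
     Cov (Phi (a Z), Phi (b Z)) = arcsin (a b / sqrt ((1 + a^2) (1 + b^2))) / (2 pi)
   gives the result. The covariance is computed by writing Phi (c z) - Phi 0 as the integral of
   z phi (t z) over t in [0, c], applying Fubini twice, and using the Gaussian integral
   of z^2 phi z phi (t z) phi (s z), which is (1 + t^2 + s^2)^(-3/2) / (2 pi). *)

theory Submission
  imports Defs
begin

abbreviation \<Phi> :: "real \<Rightarrow> real" where "\<Phi> \<equiv> std_normal_cdf"
abbreviation \<phi> :: "real \<Rightarrow> real" where "\<phi> \<equiv> std_normal_density"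

lemma real_distribution_std_normal: "real_distribution (density lborel \<phi>)"
  unfolding real_distribution_def real_distribution_axioms_def
  using prob_space_normal_density by auto

lemma std_normal_cdf_nonneg: "0 \<le> \<Phi> x"
  and std_normal_cdf_le_1: "\<Phi> x \<le> 1"
proof -
  interpret real_distribution "density lborel \<phi>" by (rule real_distribution_std_normal)
  show "0 \<le> \<Phi> x" "\<Phi> x \<le> 1"
    unfolding std_normal_cdf_def by (rule cdf_nonneg, rule cdf_bounded_prob)
qed

lemma borel_measurable_std_normal_cdf [measurable]: "\<Phi> \<in> borel_measurable borel"
proof (rule borel_measurable_mono)
  interpret real_distribution "density lborel \<phi>" by (rule real_distribution_std_normal)
  show "mono \<Phi>" unfolding mono_def std_normal_cdf_def by (auto intro: cdf_nondecreasing)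
qed

lemma std_normal_cdf_diff: "\<Phi> y - \<Phi> x = (LBINT u=x..y. \<phi> u)"
proof -
  interpret real_distribution "density lborel \<phi>" by (rule real_distribution_std_normal)
  have ordered: "\<Phi> y - \<Phi> x = (LBINT u=x..y. \<phi> u)" if "x \<le> y" for x y
  proof -
    have "\<Phi> y - \<Phi> x = measure (density lborel \<phi>) {x<..y}"
      using that unfolding std_normal_cdf_def
      by (cases "x = y") (auto intro: cdf_diff_eq)
    also have "\<dots> = integral\<^sup>L (density lborel \<phi>) (indicator {x<..y})"
      by simp
    also have "\<dots> = (LBINT u:{x<..y}. \<phi> u)"
      by (subst integral_density) (auto simp: set_lebesgue_integral_def mult.commute)
    also have "\<dots> = (LBINT u=x..y. \<phi> u)"
      using that by (simp add: interval_integral_Ioc)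
    finally show ?thesis .
  qed
  show ?thesis
  proof (cases "x \<le> y")
    case False
    then show ?thesis
      using ordered[of y x] unfolding interval_integral_endpoints_reverse[of "ereal y" "ereal x"]
      by linarith
  qed (rule ordered)
qed

lemma std_normal_cdf_scaled_eq_set_integral:
  assumes "0 \<le> c"
  shows "\<Phi> (c * z) - \<Phi> 0 = (LBINT t:{0..c}. z * \<phi> (t * z))"
proof -
  have "(LBINT t=ereal 0..ereal c. z *\<^sub>R \<phi> (t * z)) = (LBINT u=ereal (0 * z)..ereal (c * z). \<phi> u)"
    by (rule interval_integral_substitution_finite[OF assms, where g="\<lambda>t. t * z" and g'="\<lambda>_. z"])
       (auto intro!: derivative_eq_intros continuous_intros simp: normal_density_def)
  then show ?thesis
    using std_normal_cdf_diff[of "c * z" 0] assms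
    by (simp add: interval_integral_Icc zero_ereal_def)
qed

lemma std_normal_density_uminus: "\<phi> (- x) = \<phi> x"
  by (simp add: std_normal_density_def)

lemma std_normal_cdf_scaled_odd:
  assumes "0 \<le> c"
  shows "\<Phi> (- (c * z)) - \<Phi> 0 = - (\<Phi> (c * z) - \<Phi> 0)"
proof -
  have "\<Phi> (c * - z) - \<Phi> 0 = -1 * (\<Phi> (c * z) - \<Phi> 0)"
    unfolding std_normal_cdf_scaled_eq_set_integral[OF assms]
    using set_integral_mult_right[where a="-1" and f="\<lambda>t. z * \<phi> (t * z)"]
    by (simp add: std_normal_density_uminus)
  then show ?thesis by simp
qed

lemma std_normal_density_le_1: "\<phi> x \<le> 1"
proof -
  have "1 / sqrt (2 * pi) \<le> 1" using pi_gt3 by simp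
  then show ?thesis unfolding std_normal_density_def by (rule mult_le_one) auto
qed

lemma std_normal_density_triple_product:
  "\<phi> z * \<phi> (t * z) * \<phi> (s * z) = \<phi> (sqrt (1 + t\<^sup>2 + s\<^sup>2) * z) / (2 * pi)"
proof -
  have "sqrt (2 * pi) ^ 3 = 2 * pi * sqrt (2 * pi)"
    by (simp add: power3_eq_cube)
  moreover have "exp (- z\<^sup>2 / 2) * exp (- (t * z)\<^sup>2 / 2) * exp (- (s * z)\<^sup>2 / 2)
      = exp (- (sqrt (1 + t\<^sup>2 + s\<^sup>2) * z)\<^sup>2 / 2)"
    by (simp add: power_mult_distrib algebra_simps flip: exp_add)
  ultimately show ?thesis
    unfolding std_normal_density_def by (simp add: power3_eq_cube field_simps)
qed

lemma integral_sq_std_normal_density_scaled: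
  assumes "q > 0"
  shows "(\<integral>z. z\<^sup>2 * \<phi> (q * z) \<partial>lborel) = 1 / q ^ 3"
proof -
  have "1 = (\<integral>u. \<phi> u * u ^ (2 * 1) \<partial>lborel)"
    using integral_std_normal_moment_even[of 1] by simp
  also have "\<dots> = \<bar>q\<bar> *\<^sub>R (\<integral>z. \<phi> (0 + q * z) * (0 + q * z) ^ (2 * 1) \<partial>lborel)"
    by (rule lborel_integral_real_affine) (use assms in simp)
  also have "(\<lambda>z. \<phi> (0 + q * z) * (0 + q * z) ^ (2 * 1)) = (\<lambda>z. q\<^sup>2 * (z\<^sup>2 * \<phi> (q * z)))"
    by (simp add: fun_eq_iff power_mult_distrib)
  also have "\<bar>q\<bar> *\<^sub>R (\<integral>z. q\<^sup>2 * (z\<^sup>2 * \<phi> (q * z)) \<partial>lborel) = q ^ 3 * (\<integral>z. z\<^sup>2 * \<phi> (q * z) \<partial>lborel)"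
    using assms by (simp add: power2_eq_square power3_eq_cube)
  finally show ?thesis using assms by (simp add: field_simps)
qed

lemma integral_sq_std_normal_density_triple_product:
  "(\<integral>z. z\<^sup>2 * (\<phi> z * \<phi> (t * z) * \<phi> (s * z)) \<partial>lborel)
     = 1 / (2 * pi * (1 + t\<^sup>2 + s\<^sup>2) * sqrt (1 + t\<^sup>2 + s\<^sup>2))"
proof -
  define q where "q = sqrt (1 + t\<^sup>2 + s\<^sup>2)"
  have q: "q > 0" unfolding q_def by (simp add: add_pos_nonneg)
  have "q ^ 3 = (1 + t\<^sup>2 + s\<^sup>2) * q"
    unfolding q_def power3_eq_cube by (simp add: add_pos_nonneg)
  then show ?thesis
    using integral_sq_std_normal_density_scaled[OF q]
    unfolding std_normal_density_triple_product q_def[symmetric] by simp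
qed

lemma set_integral_FTC_Icc:
  fixes f F :: "real \<Rightarrow> real"
  assumes "a \<le> b"
    and "\<And>x. (F has_real_derivative f x) (at x)" and "continuous_on {a..b} f"
  shows "(LBINT x:{a..b}. f x) = F b - F a"
  unfolding set_lebesgue_integral_def
  using assms by (intro integral_FTC_atLeastAtMost)
    (auto intro: has_field_derivative_at_within
          simp flip: has_real_derivative_iff_has_vector_derivative)

lemma has_real_derivative_div_sqrt:
  assumes "c > 0"
  shows "((\<lambda>s. s / (c * sqrt (c + s\<^sup>2))) has_real_derivative
           1 / ((c + s\<^sup>2) * sqrt (c + s\<^sup>2))) (at s)"
proof -
  define r where "r = sqrt (c + s\<^sup>2)"
  have r: "r > 0" "r\<^sup>2 = c + s\<^sup>2"
    using assms unfolding r_def by (auto intro: add_pos_nonneg)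
  have "((\<lambda>s. s / (c * sqrt (c + s\<^sup>2))) has_real_derivative
      (c * r - s * (c * (inverse r / 2 * (2 * s)))) / (c * r)\<^sup>2) (at s)"
    unfolding r_def using r assms
    by (auto intro!: derivative_eq_intros simp: power2_eq_square r_def)
  moreover have "(c * r - s * (c * (inverse r / 2 * (2 * s)))) / (c * r)\<^sup>2 = 1 / (r\<^sup>2 * r)"
  proof -
    have numerator: "c * r - s * (c * (inverse r / 2 * (2 * s))) = c * c / r"
      using r assms by (simp add: field_simps power2_eq_square)
    show ?thesis
      unfolding numerator using r(1) assms by (simp add: field_simps power2_eq_square)
  qed
  ultimately show ?thesis
    using r(2) unfolding r_def by simp
qed

lemma set_integral_inverse_pow_three_halves:
  assumes "c > 0" "b \<ge> 0"
  shows "(LBINT s:{0..b}. 1 / ((c + s\<^sup>2) * sqrt (c + s\<^sup>2))) = b / (c * sqrt (c + b\<^sup>2))"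
proof -
  have "c + s\<^sup>2 \<noteq> 0" for s
    using assms by (smt (verit) zero_le_power2)
  then have "continuous_on {0..b} (\<lambda>s. 1 / ((c + s\<^sup>2) * sqrt (c + s\<^sup>2)))"
    by (intro continuous_intros) auto
  from set_integral_FTC_Icc[OF assms(2) has_real_derivative_div_sqrt[OF assms(1)] this]
  show ?thesis by simp
qed

lemma has_real_derivative_arcsin_corr:
  "((\<lambda>t. arcsin (t * b / sqrt ((1 + t\<^sup>2) * (1 + b\<^sup>2)))) has_real_derivative
     b / ((1 + t\<^sup>2) * sqrt (1 + t\<^sup>2 + b\<^sup>2))) (at t)"
proof -
  define k where "k = b / sqrt (1 + b\<^sup>2)"
  define g where "g = k * (t / sqrt (1 + t\<^sup>2))"
  have pos: "1 + b\<^sup>2 > 0" "1 + t\<^sup>2 > 0" "1 + t\<^sup>2 + b\<^sup>2 > 0"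
    by (simp_all add: add_pos_nonneg)
  have F: "(\<lambda>t. arcsin (t * b / sqrt ((1 + t\<^sup>2) * (1 + b\<^sup>2))))
      = (\<lambda>t. arcsin (k * (t / sqrt (1 + t\<^sup>2))))"
    by (simp add: k_def real_sqrt_mult mult_ac)
  have "g\<^sup>2 = b\<^sup>2 * t\<^sup>2 / ((1 + b\<^sup>2) * (1 + t\<^sup>2))"
    unfolding g_def k_def using pos by (simp add: power_divide power_mult_distrib)
  then have "1 - g\<^sup>2 = ((1 + b\<^sup>2) * (1 + t\<^sup>2) - b\<^sup>2 * t\<^sup>2) / ((1 + b\<^sup>2) * (1 + t\<^sup>2))"
    using pos by (simp add: diff_divide_distrib)
  also have "(1 + b\<^sup>2) * (1 + t\<^sup>2) - b\<^sup>2 * t\<^sup>2 = 1 + t\<^sup>2 + b\<^sup>2"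
    by (simp add: algebra_simps)
  finally have one_minus_g2: "1 - g\<^sup>2 = (1 + t\<^sup>2 + b\<^sup>2) / ((1 + b\<^sup>2) * (1 + t\<^sup>2))" .
  then have sqrt_1_minus_g2:
      "sqrt (1 - g\<^sup>2) = sqrt (1 + t\<^sup>2 + b\<^sup>2) / (sqrt (1 + b\<^sup>2) * sqrt (1 + t\<^sup>2))"
    by (simp add: real_sqrt_divide real_sqrt_mult)
  have "(1 + t\<^sup>2 + b\<^sup>2) / ((1 + b\<^sup>2) * (1 + t\<^sup>2)) > 0"
    using pos by simp
  then have "g\<^sup>2 < 1"
    using one_minus_g2 by linarith
  then have "-1 < g" "g < 1"
    by (simp_all add: abs_square_less_1 abs_less_iff)
  have "((\<lambda>t. k * (t / sqrt (1 + t\<^sup>2))) has_real_derivative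
      k * (1 / ((1 + t\<^sup>2) * sqrt (1 + t\<^sup>2)))) (at t)"
    using DERIV_cmult[OF has_real_derivative_div_sqrt[of 1 t], of k] by simp
  from DERIV_chain2[OF DERIV_arcsin[OF \<open>-1 < g\<close> \<open>g < 1\<close>, unfolded g_def] this]
  have "((\<lambda>t. arcsin (k * (t / sqrt (1 + t\<^sup>2)))) has_real_derivative
      inverse (sqrt (1 - g\<^sup>2)) * (k * (1 / ((1 + t\<^sup>2) * sqrt (1 + t\<^sup>2))))) (at t)"
    unfolding g_def .
  moreover have "inverse (sqrt (1 - g\<^sup>2)) * (k * (1 / ((1 + t\<^sup>2) * sqrt (1 + t\<^sup>2))))
      = b / ((1 + t\<^sup>2) * sqrt (1 + t\<^sup>2 + b\<^sup>2))"
  proof -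
    have "inverse (C / (A * B)) * (b / A * (1 / (T * B))) = b / (T * C)"
      if "0 < A" "0 < B" "0 < C" "0 < T" for A B C T :: real
      using that by (simp add: field_simps)
    then show ?thesis
      unfolding sqrt_1_minus_g2 k_def using pos by simp
  qed
  ultimately show ?thesis unfolding F by simp
qed

lemma set_integral_arcsin_corr:
  assumes "a \<ge> 0"
  shows "(LBINT t:{0..a}. b / ((1 + t\<^sup>2) * sqrt (1 + t\<^sup>2 + b\<^sup>2)))
     = arcsin (a * b / sqrt ((1 + a\<^sup>2) * (1 + b\<^sup>2)))"
proof -
  have "1 + t\<^sup>2 + b\<^sup>2 \<noteq> 0" "1 + t\<^sup>2 \<noteq> 0" for t
    by (smt (verit) zero_le_power2)+
  then have "continuous_on {0..a} (\<lambda>t. b / ((1 + t\<^sup>2) * sqrt (1 + t\<^sup>2 + b\<^sup>2)))"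
    by (intro continuous_intros) auto
  from set_integral_FTC_Icc[OF assms has_real_derivative_arcsin_corr this]
  show ?thesis by simp
qed

lemma (in pair_sigma_finite) integrable_product:
  fixes f :: "'a \<Rightarrow> real" and g :: "'b \<Rightarrow> real"
  assumes f: "integrable M1 f" and g: "integrable M2 g"
  shows "integrable (M1 \<Otimes>\<^sub>M M2) (\<lambda>(x, y). f x * g y)"
proof (rule Fubini_integrable)
  have [measurable]: "f \<in> borel_measurable M1" "g \<in> borel_measurable M2"
    using f g by (auto dest: borel_measurable_integrable)
  show "(\<lambda>(x, y). f x * g y) \<in> borel_measurable (M1 \<Otimes>\<^sub>M M2)"
    by measurable
  show "integrable M1 (\<lambda>x. \<integral>y. norm ((\<lambda>(x, y). f x * g y) (x, y)) \<partial>M2)"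
    using f by (simp add: abs_mult)
  show "AE x in M1. integrable M2 (\<lambda>y. (\<lambda>(x, y). f x * g y) (x, y))"
    using g by simp
qed

lemma integral_mult_std_normal_cdf_scaled:
  fixes g :: "real \<Rightarrow> real"
  assumes "0 \<le> c"
    and g: "integrable lborel (\<lambda>z. g z * z)" and [measurable]: "g \<in> borel_measurable borel"
  shows "(\<integral>z. g z * (\<Phi> (c * z) - \<Phi> 0) \<partial>lborel)
     = (LBINT t:{0..c}. \<integral>z. g z * (z * \<phi> (t * z)) \<partial>lborel)"
proof -
  define f where "f t z = indicator {0..c} t * (g z * (z * \<phi> (t * z)))" for t z
  have "integrable (lborel \<Otimes>\<^sub>M lborel) (case_prod f)"
  proof (rule Bochner_Integration.integrable_bound)
    show "integrable (lborel \<Otimes>\<^sub>M lborel) (\<lambda>(t, z). indicator {0..c} t * \<bar>g z * z\<bar>)"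
      using g by (intro lborel_pair.integrable_product) (auto simp: emeasure_lborel_Icc_eq)
    show "case_prod f \<in> borel_measurable (lborel \<Otimes>\<^sub>M lborel)"
      unfolding f_def by measurable
    have "\<bar>f t z\<bar> \<le> indicator {0..c} t * \<bar>g z * z\<bar>" for t z
      using std_normal_density_le_1[of "t * z"] mult_left_le[of "\<phi> (t * z)" "\<bar>g z * z\<bar>"]
      by (auto simp: f_def abs_mult mult_ac split: split_indicator)
    then show "AE x in lborel \<Otimes>\<^sub>M lborel.
        norm (case_prod f x) \<le> norm ((\<lambda>(t, z). indicator {0..c} t * \<bar>g z * z\<bar>) x)"
      by (auto simp: abs_mult)
  qed
  then have "(\<integral>z. \<integral>t. f t z \<partial>lborel \<partial>lborel) = (\<integral>t. \<integral>z. f t z \<partial>lborel \<partial>lborel)"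
    by (rule lborel_pair.Fubini_integral)
  moreover have "(\<integral>t. f t z \<partial>lborel) = g z * (\<Phi> (c * z) - \<Phi> 0)" for z
    unfolding std_normal_cdf_scaled_eq_set_integral[OF assms(1)] f_def set_lebesgue_integral_def
    by (simp add: mult_ac)
  moreover have "(\<integral>z. f t z \<partial>lborel)
      = indicator {0..c} t * (\<integral>z. g z * (z * \<phi> (t * z)) \<partial>lborel)" for t
    unfolding f_def by simp
  ultimately show ?thesis
    by (simp add: set_lebesgue_integral_def)
qed

lemma integral_std_normal_cdf_scaled_centered:
  assumes "0 \<le> a"
  shows "(\<integral>z. \<phi> z * (\<Phi> (a * z) - \<Phi> 0) \<partial>lborel) = 0"
proof -
  have "(\<integral>z. \<phi> z * (\<Phi> (a * z) - \<Phi> 0) \<partial>lborel)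
      = \<bar>-1\<bar> *\<^sub>R (\<integral>z. \<phi> (0 + -1 * z) * (\<Phi> (a * (0 + -1 * z)) - \<Phi> 0) \<partial>lborel)"
    by (rule lborel_integral_real_affine) simp
  also have "(\<lambda>z. \<phi> (0 + -1 * z) * (\<Phi> (a * (0 + -1 * z)) - \<Phi> 0))
      = (\<lambda>z. - (\<phi> z * (\<Phi> (a * z) - \<Phi> 0)))"
    by (simp add: fun_eq_iff std_normal_density_uminus std_normal_cdf_scaled_odd[OF assms]
        right_diff_distrib)
  also have "\<bar>-1\<bar> *\<^sub>R (\<integral>z. - (\<phi> z * (\<Phi> (a * z) - \<Phi> 0)) \<partial>lborel)
      = - (\<integral>z. \<phi> z * (\<Phi> (a * z) - \<Phi> 0) \<partial>lborel)"
    by (simp only: integral_minus) simp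
  finally show ?thesis by simp
qed

text \<open>The integrand is the derivative in \<open>a\<close>, at \<open>a = t\<close>, of the integrand of the covariance
  integral below.\<close>

lemma integral_std_normal_cdf_scaled_cov_deriv:
  assumes "0 \<le> b"
  shows "(\<integral>z. \<phi> z * (z * \<phi> (t * z)) * (\<Phi> (b * z) - \<Phi> 0) \<partial>lborel)
     = b / (2 * pi * (1 + t\<^sup>2) * sqrt (1 + t\<^sup>2 + b\<^sup>2))"
proof -
  have "(\<lambda>z. \<phi> z * (z * \<phi> (t * z)) * z) = (\<lambda>z. \<phi> (t * z) * (\<phi> z * z ^ 2))"
    by (simp add: fun_eq_iff power2_eq_square mult_ac)
  moreover have "integrable lborel (\<lambda>z. \<phi> (t * z) * (\<phi> z * z ^ 2))"
  proof (rule Bochner_Integration.integrable_bound[OF integrable_std_normal_moment[of 2]])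
    have "norm (\<phi> (t * z) * (\<phi> z * z ^ 2)) \<le> norm (\<phi> z * z ^ 2)" for z
      using mult_left_le_one_le[OF _ _ std_normal_density_le_1, of "\<phi> z * z ^ 2" "t * z"]
      by (simp add: abs_mult)
    then show "AE z in lborel. norm (\<phi> (t * z) * (\<phi> z * z ^ 2)) \<le> norm (\<phi> z * z ^ 2)"
      by simp
  qed measurable
  ultimately have "integrable lborel (\<lambda>z. \<phi> z * (z * \<phi> (t * z)) * z)"
    by simp
  then have "(\<integral>z. \<phi> z * (z * \<phi> (t * z)) * (\<Phi> (b * z) - \<Phi> 0) \<partial>lborel)
      = (LBINT s:{0..b}. \<integral>z. \<phi> z * (z * \<phi> (t * z)) * (z * \<phi> (s * z)) \<partial>lborel)"
    by (rule integral_mult_std_normal_cdf_scaled[OF assms]) measurable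
  also have "\<dots> = (LBINT s:{0..b}. 1 / (2 * pi) * (1 / ((1 + t\<^sup>2 + s\<^sup>2) * sqrt (1 + t\<^sup>2 + s\<^sup>2))))"
  proof -
    have "(\<integral>z. \<phi> z * (z * \<phi> (t * z)) * (z * \<phi> (s * z)) \<partial>lborel)
        = 1 / (2 * pi) * (1 / ((1 + t\<^sup>2 + s\<^sup>2) * sqrt (1 + t\<^sup>2 + s\<^sup>2)))" for s
      using integral_sq_std_normal_density_triple_product[of t s]
      by (simp add: power2_eq_square mult_ac)
    then show ?thesis by (simp only:)
  qed
  also have "\<dots> = 1 / (2 * pi) * (b / ((1 + t\<^sup>2) * sqrt (1 + t\<^sup>2 + b\<^sup>2)))"
    unfolding set_integral_mult_right
    using set_integral_inverse_pow_three_halves[of "1 + t\<^sup>2" b] assms by (simp add: add_pos_nonneg)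
  finally show ?thesis by simp
qed

lemma integral_std_normal_cdf_scaled_cov:
  assumes "0 \<le> a" "0 \<le> b"
  shows "(\<integral>z. \<phi> z * ((\<Phi> (a * z) - \<Phi> 0) * (\<Phi> (b * z) - \<Phi> 0)) \<partial>lborel)
     = arcsin (a * b / sqrt ((1 + a\<^sup>2) * (1 + b\<^sup>2))) / (2 * pi)"
proof -
  have "integrable lborel (\<lambda>z. \<phi> z * (\<Phi> (b * z) - \<Phi> 0) * z)"
  proof (rule Bochner_Integration.integrable_bound[OF integrable_std_normal_moment_abs[of 1]])
    have "\<bar>\<Phi> (b * z) - \<Phi> 0\<bar> * (\<phi> z * \<bar>z\<bar>) \<le> 1 * (\<phi> z * \<bar>z\<bar>)" for z
      using std_normal_cdf_nonneg[of "b * z"] std_normal_cdf_le_1[of "b * z"]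
        std_normal_cdf_nonneg[of 0] std_normal_cdf_le_1[of 0]
      by (intro mult_right_mono) auto
    then show "AE z in lborel. norm (\<phi> z * (\<Phi> (b * z) - \<Phi> 0) * z) \<le> norm (\<phi> z * \<bar>z\<bar> ^ 1)"
      by (simp add: abs_mult mult_ac)
  qed measurable
  then have "(\<integral>z. \<phi> z * (\<Phi> (b * z) - \<Phi> 0) * (\<Phi> (a * z) - \<Phi> 0) \<partial>lborel)
      = (LBINT t:{0..a}. \<integral>z. \<phi> z * (\<Phi> (b * z) - \<Phi> 0) * (z * \<phi> (t * z)) \<partial>lborel)"
    by (rule integral_mult_std_normal_cdf_scaled[OF assms(1)]) measurable
  also have "\<dots> = (LBINT t:{0..a}. 1 / (2 * pi) * (b / ((1 + t\<^sup>2) * sqrt (1 + t\<^sup>2 + b\<^sup>2))))"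
  proof -
    have "(\<integral>z. \<phi> z * (\<Phi> (b * z) - \<Phi> 0) * (z * \<phi> (t * z)) \<partial>lborel)
        = 1 / (2 * pi) * (b / ((1 + t\<^sup>2) * sqrt (1 + t\<^sup>2 + b\<^sup>2)))" for t
      using integral_std_normal_cdf_scaled_cov_deriv[OF assms(2), of t] by (simp add: mult_ac)
    then show ?thesis by (simp only:)
  qed
  also have "\<dots> = arcsin (a * b / sqrt ((1 + a\<^sup>2) * (1 + b\<^sup>2))) / (2 * pi)"
    unfolding set_integral_mult_right using set_integral_arcsin_corr[OF assms(1), of b] by simp
  finally show ?thesis by (simp add: mult_ac)
qed

lemma (in finite_measure) integrable_std_normal_cdf_comp:
  "f \<in> borel_measurable M \<Longrightarrow> integrable M (\<lambda>x. \<Phi> (f x))"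
  using std_normal_cdf_nonneg std_normal_cdf_le_1 by (intro integrable_const_bound[where B=1]) auto

lemma pearson_corr_affine:
  fixes X Y :: "'a \<Rightarrow> real"
  assumes "prob_space M" "integrable M X" "integrable M Y" "0 < \<beta> * \<delta>"
  shows "pearson_corr M (\<lambda>\<omega>. \<alpha> + \<beta> * X \<omega>) (\<lambda>\<omega>. \<gamma> + \<delta> * Y \<omega>) = pearson_corr M X Y"
proof -
  interpret prob_space M by fact
  define mX mY where "mX = expectation X" and "mY = expectation Y"
  define C VX VY where "C = expectation (\<lambda>\<omega>. (X \<omega> - mX) * (Y \<omega> - mY))"
    and "VX = expectation (\<lambda>\<omega>. (X \<omega> - mX)\<^sup>2)" and "VY = expectation (\<lambda>\<omega>. (Y \<omega> - mY)\<^sup>2)"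
  have "expectation (\<lambda>\<omega>. \<alpha> + \<beta> * X \<omega>) = \<alpha> + \<beta> * mX"
    using assms(2) unfolding mX_def
    by (subst Bochner_Integration.integral_add) (auto simp: prob_space)
  moreover have "expectation (\<lambda>\<omega>. \<gamma> + \<delta> * Y \<omega>) = \<gamma> + \<delta> * mY"
    using assms(3) unfolding mY_def
    by (subst Bochner_Integration.integral_add) (auto simp: prob_space)
  moreover have "(\<lambda>\<omega>. (\<alpha> + \<beta> * X \<omega> - (\<alpha> + \<beta> * mX)) * (\<gamma> + \<delta> * Y \<omega> - (\<gamma> + \<delta> * mY)))
      = (\<lambda>\<omega>. (\<beta> * \<delta>) * ((X \<omega> - mX) * (Y \<omega> - mY)))"
    "(\<lambda>\<omega>. (\<alpha> + \<beta> * X \<omega> - (\<alpha> + \<beta> * mX))\<^sup>2) = (\<lambda>\<omega>. \<beta>\<^sup>2 * (X \<omega> - mX)\<^sup>2)"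
    "(\<lambda>\<omega>. (\<gamma> + \<delta> * Y \<omega> - (\<gamma> + \<delta> * mY))\<^sup>2) = (\<lambda>\<omega>. \<delta>\<^sup>2 * (Y \<omega> - mY)\<^sup>2)"
    by (simp_all add: fun_eq_iff algebra_simps power2_eq_square)
  moreover have "sqrt (\<beta>\<^sup>2 * VX * (\<delta>\<^sup>2 * VY)) = (\<beta> * \<delta>) * sqrt (VX * VY)"
    using assms(4) by (simp add: real_sqrt_mult power_mult_distrib[symmetric] mult_ac)
  ultimately have "pearson_corr M (\<lambda>\<omega>. \<alpha> + \<beta> * X \<omega>) (\<lambda>\<omega>. \<gamma> + \<delta> * Y \<omega>)
      = (\<beta> * \<delta>) * C / ((\<beta> * \<delta>) * sqrt (VX * VY))"
    unfolding pearson_corr_def Let_def C_def VX_def VY_def by (simp add: mult.assoc)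
  also have "\<dots> = C / sqrt (VX * VY)"
    using assms(4) by (subst mult_divide_mult_cancel_left) auto
  also have "\<dots> = pearson_corr M X Y"
    unfolding pearson_corr_def Let_def C_def VX_def VY_def mX_def mY_def ..
  finally show ?thesis .
qed

lemma pearson_corr_std_normal_cdf_scaled:
  assumes "prob_space M" and Z: "distributed M lborel Z \<phi>" and "0 \<le> a" "0 \<le> b"
  shows "pearson_corr M (\<lambda>\<omega>. \<Phi> (a * Z \<omega>)) (\<lambda>\<omega>. \<Phi> (b * Z \<omega>))
     = arcsin (a * b / sqrt ((1 + a\<^sup>2) * (1 + b\<^sup>2)))
       / sqrt (arcsin (a\<^sup>2 / (1 + a\<^sup>2)) * arcsin (b\<^sup>2 / (1 + b\<^sup>2)))"
proof -
  interpret prob_space M by fact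
  have [measurable]: "Z \<in> borel_measurable M"
    using distributed_measurable[OF Z] by simp
  have E: "expectation (\<lambda>\<omega>. h (Z \<omega>)) = (\<integral>z. \<phi> z * h z \<partial>lborel)"
    if "h \<in> borel_measurable borel" for h
    using distributed_integral[OF Z, of h] that by simp
  have mean: "expectation (\<lambda>\<omega>. \<Phi> (c * Z \<omega>)) = \<Phi> 0" if "0 \<le> c" for c
  proof -
    have "integrable M (\<lambda>\<omega>. \<Phi> (c * Z \<omega>))"
      by (rule integrable_std_normal_cdf_comp) simp
    moreover have "expectation (\<lambda>\<omega>. \<Phi> (c * Z \<omega>) - \<Phi> 0) = 0"
      using E[of "\<lambda>z. \<Phi> (c * z) - \<Phi> 0"] integral_std_normal_cdf_scaled_centered[OF that] by simp
    ultimately show ?thesis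
      by (simp add: prob_space)
  qed
  define A where "A c d = arcsin (c * d / sqrt ((1 + c\<^sup>2) * (1 + d\<^sup>2)))" for c d
  have cov: "expectation (\<lambda>\<omega>. (\<Phi> (c * Z \<omega>) - \<Phi> 0) * (\<Phi> (d * Z \<omega>) - \<Phi> 0)) = A c d / (2 * pi)"
    if "0 \<le> c" "0 \<le> d" for c d
    using E[of "\<lambda>z. (\<Phi> (c * z) - \<Phi> 0) * (\<Phi> (d * z) - \<Phi> 0)"]
      integral_std_normal_cdf_scaled_cov[OF that] unfolding A_def by simp
  have A_diag: "A c c = arcsin (c\<^sup>2 / (1 + c\<^sup>2))" for c
  proof -
    have "sqrt ((1 + c\<^sup>2) * (1 + c\<^sup>2)) = 1 + c\<^sup>2"
      by (simp add: add_nonneg_nonneg)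
    then show ?thesis unfolding A_def by (simp add: power2_eq_square)
  qed
  have "pearson_corr M (\<lambda>\<omega>. \<Phi> (a * Z \<omega>)) (\<lambda>\<omega>. \<Phi> (b * Z \<omega>))
      = (A a b / (2 * pi)) / sqrt (A a a / (2 * pi) * (A b b / (2 * pi)))"
    unfolding pearson_corr_def Let_def mean[OF assms(3)] mean[OF assms(4)] power2_eq_square
    using cov assms(3,4) by simp
  also have "\<dots> = A a b / sqrt (A a a * A b b)"
    by (simp add: real_sqrt_mult real_sqrt_divide)
  finally show ?thesis unfolding A_diag by (simp add: A_def)
qed

lemma pearson_corr_two_sided_p_values:
  assumes "prob_space M" and Z: "distributed M lborel Z \<phi>" and "0 \<le> a"
  defines "w \<equiv> a\<^sup>2 / (1 + a\<^sup>2)"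
  shows "pearson_corr M (\<lambda>\<omega>. 2 * (1 - \<Phi> (a * Z \<omega>))) (\<lambda>\<omega>. 2 * (1 - \<Phi> (sqrt (1 + a\<^sup>2) * Z \<omega>)))
     = arcsin (sqrt (w / (2 - w))) / sqrt (arcsin w * arcsin (1 / (2 - w)))"
proof -
  interpret prob_space M by fact
  define b where "b = sqrt (1 + a\<^sup>2)"
  have pos: "0 < 1 + a\<^sup>2" "0 < 2 + a\<^sup>2"
    by (simp_all add: add_pos_nonneg)
  then have b: "0 \<le> b" "b\<^sup>2 = 1 + a\<^sup>2"
    unfolding b_def by simp_all
  have [measurable]: "Z \<in> borel_measurable M"
    using distributed_measurable[OF Z] by simp
  have int: "integrable M (\<lambda>\<omega>. \<Phi> (c * Z \<omega>))" for c
    by (rule integrable_std_normal_cdf_comp) simp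
  have "(\<lambda>\<omega>. 2 * (1 - \<Phi> (c * Z \<omega>))) = (\<lambda>\<omega>. 2 + -2 * \<Phi> (c * Z \<omega>))" for c
    by (simp add: fun_eq_iff algebra_simps)
  then have "pearson_corr M (\<lambda>\<omega>. 2 * (1 - \<Phi> (a * Z \<omega>))) (\<lambda>\<omega>. 2 * (1 - \<Phi> (b * Z \<omega>)))
      = pearson_corr M (\<lambda>\<omega>. 2 + -2 * \<Phi> (a * Z \<omega>)) (\<lambda>\<omega>. 2 + -2 * \<Phi> (b * Z \<omega>))"
    by (simp only:)
  also have "\<dots> = pearson_corr M (\<lambda>\<omega>. \<Phi> (a * Z \<omega>)) (\<lambda>\<omega>. \<Phi> (b * Z \<omega>))"
    by (rule pearson_corr_affine[OF assms(1) int int]) simp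
  also have "\<dots> = arcsin (a * b / sqrt ((1 + a\<^sup>2) * (1 + b\<^sup>2)))
      / sqrt (arcsin (a\<^sup>2 / (1 + a\<^sup>2)) * arcsin (b\<^sup>2 / (1 + b\<^sup>2)))"
    by (rule pearson_corr_std_normal_cdf_scaled[OF assms(1) Z assms(3) b(1)])
  also have "\<dots> = arcsin (sqrt (w / (2 - w))) / sqrt (arcsin w * arcsin (1 / (2 - w)))"
  proof -
    have w2: "2 - w = (2 + a\<^sup>2) / (1 + a\<^sup>2)"
      using pos unfolding w_def by (simp add: field_simps)
    have "w / (2 - w) = a\<^sup>2 / (2 + a\<^sup>2)"
      unfolding w2 unfolding w_def using pos by simp
    then have "a * b / sqrt ((1 + a\<^sup>2) * (1 + b\<^sup>2)) = sqrt (w / (2 - w))"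
      unfolding b(2) unfolding b_def using pos assms(3)
      by (simp add: real_sqrt_mult real_sqrt_divide add.assoc[symmetric])
    moreover have "b\<^sup>2 / (1 + b\<^sup>2) = 1 / (2 - w)"
      unfolding b(2) w2 using pos by (simp add: add.assoc[symmetric])
    ultimately show ?thesis
      unfolding w_def by simp
  qed
  finally show ?thesis
    by (simp only: b_def)
qed

theorem mainTheorem5:
  fixes M :: "'a measure" and Xbar :: "'a \<Rightarrow> real"
    and n :: nat and \<sigma> \<tau> \<theta>\<^sub>0 :: real
  assumes "prob_space M"
    and "n \<ge> 1" and "\<sigma> > 0" and "\<tau> > 0"
    and "distributed M lborel Xbar (normal_density \<theta>\<^sub>0 (sqrt (\<tau>\<^sup>2 + \<sigma>\<^sup>2 / real n)))"
  shows "(let w = real n * \<tau>\<^sup>2 / (\<sigma>\<^sup>2 + real n * \<tau>\<^sup>2);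
              P\<^sub>b = (\<lambda>\<omega>. 2 * (1 - std_normal_cdf
                       (real n * \<tau> * (Xbar \<omega> - \<theta>\<^sub>0) / (\<sigma> * sqrt (\<sigma>\<^sup>2 + real n * \<tau>\<^sup>2)))));
              P\<^sub>f = (\<lambda>\<omega>. 2 * (1 - std_normal_cdf (sqrt (real n) * (Xbar \<omega> - \<theta>\<^sub>0) / \<sigma>)))
          in pearson_corr M P\<^sub>b P\<^sub>f
             = arcsin (sqrt (w / (2 - w))) / sqrt (arcsin w * arcsin (1 / (2 - w))))"
proof -
  define S where "S = \<sigma>\<^sup>2 + real n * \<tau>\<^sup>2"
  define a where "a = sqrt (real n) * \<tau> / \<sigma>"
  define Z where "Z \<omega> = sqrt (real n) * (Xbar \<omega> - \<theta>\<^sub>0) / sqrt S" for \<omega>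
  have n: "real n > 0" and S: "S > 0"
    using assms(2-4) unfolding S_def by (simp_all add: add_pos_pos)
  have "1 + a\<^sup>2 = S / \<sigma>\<^sup>2"
    using assms(3) unfolding a_def S_def by (simp add: power_divide power_mult_distrib field_simps)
  then have a: "0 \<le> a" "sqrt (1 + a\<^sup>2) = sqrt S / \<sigma>"
    using assms(3,4) unfolding a_def by (simp_all add: real_sqrt_divide)
  define s where "s = sqrt (\<tau>\<^sup>2 + \<sigma>\<^sup>2 / real n)"
  have "\<tau>\<^sup>2 + \<sigma>\<^sup>2 / real n = S / real n"
    using n unfolding S_def by (simp add: field_simps)
  then have s_eq: "s = sqrt S / sqrt (real n)"
    unfolding s_def by (simp only: real_sqrt_divide)
  have "s > 0" and "Z = (\<lambda>\<omega>. (Xbar \<omega> - \<theta>\<^sub>0) / s)"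
    unfolding s_eq Z_def using n S by (simp_all add: fun_eq_iff mult.commute)
  then have Z: "distributed M lborel Z \<phi>"
    using prob_space.normal_standard_normal_convert[OF assms(1) \<open>s > 0\<close>] assms(5)
    unfolding s_def by simp
  have "real n * \<tau> * (Xbar \<omega> - \<theta>\<^sub>0) / (\<sigma> * sqrt (\<sigma>\<^sup>2 + real n * \<tau>\<^sup>2)) = a * Z \<omega>"
    and "sqrt (real n) * (Xbar \<omega> - \<theta>\<^sub>0) / \<sigma> = sqrt (1 + a\<^sup>2) * Z \<omega>" for \<omega>
    using n S assms(3) unfolding a(2) unfolding a_def Z_def S_def[symmetric]
    by (simp_all add: field_simps)
  moreover have "real n * \<tau>\<^sup>2 / (\<sigma>\<^sup>2 + real n * \<tau>\<^sup>2) = a\<^sup>2 / (1 + a\<^sup>2)"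
    using n S assms(3) unfolding a_def S_def[symmetric]
    by (simp add: power_divide power_mult_distrib field_simps S_def)
  ultimately show ?thesis
    unfolding Let_def using pearson_corr_two_sided_p_values[OF assms(1) Z a(1)] by simp
qed

end
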